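(* Let $W$ be a channel from $\{1,\dots,m\}$ to $\{1,\dots,n\}$. Then $\Lambda(W)$ is a bounded, closed convex polytope. For each $f\in\{10,01,11\}$, the set $\{C_f(\lambda):\lambda\in\Lambda(W)\}$ is a closed interval and $\overline{C}_f(W)$ is attained at some vertex of $\Lambda(W)$. Furthermore, $\underline{C}_{11}(W)$ is also attained at some vertex of $\Lambda(W)$.
   Context: A channel from a finite set $A$ to a finite set $B$ is a row-stochastic matrix. Let $\mathcal{X}=\{1,\dots,m\}$, $\mathcal{Y}=\{1,\dots,n\}$. A deterministic channel is a 0-1 channel, identified with a map $D:\mathcal{X}\to\mathcal{Y}$; $\mathcal{D}$ is the set of all of them, $\mathrm{rank}(D)$ the matrix rank. $\Lambda(W)=\{\lambda\text{ probability distribution on }\mathcal{D}: W=\sum_D\lambda_DD\}$. For a channel $K$ and input distribution $\mu$, $I(\mu,K)=\sum_x\mu_x D(K_{x,*}\|\mu K)$ (KL divergence, base 2). For a probability distribution $\lambda$ on $\mathcal{D}$: $C_{11}(\lambda)=\sum_D\lambda_D\log_2\mathrm{rank}(D)$; $C_{01}(\lambda)=\max_{\mu}\sum_D\lambda_D I(\mu,D)$ over distributions $\mu$ on $\mathcal{X}$; $C_{10}(\lambda)=\max_\mu I(\mu,V^\lambda)$ over distributions $\mu$ on the set $\mathcal{X}^{\mathcal{D}}$ of maps $u:\mathcal{D}\to\mathcal{X}$, where $V^\lambda_{u,y}=\sum_D\lambda_D D_{u(D),y}$. $\underline{C}_f(W)=\inf_{\lambda\in\Lambda(W)}C_f(\lambda)$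 and $\overline{C}_f(W)=\sup_{\lambda\in\Lambda(W)}C_f(\lambda)$. *)

theory Defs
  imports "HOL-Analysis.Analysis"
begin

text \<open>Input alphabet X = UNIV :: 'x set (finite, card m), output alphabet Y = UNIV :: 'y set
  (finite, card n). Matrices are real^'y^'x (rows indexed by inputs).\<close>

definition is_channel :: "real^'b::finite^'a::finite \<Rightarrow> bool" where
  "is_channel K \<longleftrightarrow> (\<forall>a b. 0 \<le> K $ a $ b) \<and> (\<forall>a. (\<Sum>b\<in>UNIV. K $ a $ b) = 1)"

definition detmat :: "('x::finite \<Rightarrow> 'y::finite) \<Rightarrow> real^'y^'x" where
  "detmat D = (\<chi> x y. if D x = y then 1 else 0)"

definition prob_dists :: "('a::finite \<Rightarrow> real) set" where
  "prob_dists = {\<mu>. (\<forall>a. 0 \<le> \<mu> a) \<and> (\<Sum>a\<in>UNIV. \<mu> a) = 1}"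

definition Lam :: "real^'y::finite^'x::finite \<Rightarrow> (real^('x \<Rightarrow> 'y)) set" where
  "Lam W = {l. (\<forall>D. 0 \<le> l $ D) \<and> (\<Sum>D\<in>UNIV. l $ D) = 1 \<and>
                W = (\<Sum>D\<in>UNIV. l $ D *\<^sub>R detmat D)}"

definition KL :: "('b::finite \<Rightarrow> real) \<Rightarrow> ('b \<Rightarrow> real) \<Rightarrow> real" where
  "KL p q = (\<Sum>b\<in>UNIV. if p b = 0 then 0 else p b * log 2 (p b / q b))"

definition outd :: "('a::finite \<Rightarrow> real) \<Rightarrow> ('a \<Rightarrow> 'b \<Rightarrow> real) \<Rightarrow> 'b \<Rightarrow> real" where
  "outd \<mu> K b = (\<Sum>a\<in>UNIV. \<mu> a * K a b)"

definition MI :: "('a::finite \<Rightarrow> real) \<Rightarrow> ('a \<Rightarrow> 'b::finite \<Rightarrow> real) \<Rightarrow> real" where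
  "MI \<mu> K = (\<Sum>a\<in>UNIV. if \<mu> a = 0 then 0 else \<mu> a * KL (K a) (outd \<mu> K))"

definition C11 :: "real^('x::finite \<Rightarrow> 'y::finite) \<Rightarrow> real" where
  "C11 l = (\<Sum>D\<in>UNIV. l $ D * log 2 (real (rank (detmat D))))"

definition C01 :: "real^('x::finite \<Rightarrow> 'y::finite) \<Rightarrow> real" where
  "C01 l = (SUP \<mu>\<in>(prob_dists :: ('x \<Rightarrow> real) set).
              (\<Sum>D\<in>UNIV. l $ D * MI \<mu> (\<lambda>x y. detmat D $ x $ y)))"

definition Vlam :: "real^('x::finite \<Rightarrow> 'y::finite) \<Rightarrow> (('x \<Rightarrow> 'y) \<Rightarrow> 'x) \<Rightarrow> 'y \<Rightarrow> real" where
  "Vlam l u y = (\<Sum>D\<in>UNIV. l $ D * detmat D $ (u D) $ y)"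

definition C10 :: "real^('x::finite \<Rightarrow> 'y::finite) \<Rightarrow> real" where
  "C10 l = (SUP \<mu>\<in>(prob_dists :: ((('x \<Rightarrow> 'y) \<Rightarrow> 'x) \<Rightarrow> real) set). MI \<mu> (Vlam l))"

definition Cupper :: "(real^('x::finite \<Rightarrow> 'y::finite) \<Rightarrow> real) \<Rightarrow> real^'y^'x \<Rightarrow> real" where
  "Cupper C W = (SUP l\<in>Lam W. C l)"

definition Clower :: "(real^('x::finite \<Rightarrow> 'y::finite) \<Rightarrow> real) \<Rightarrow> real^'y^'x \<Rightarrow> real" where
  "Clower C W = (INF l\<in>Lam W. C l)"

end

theory Submission
  imports Defs
begin

text \<open>\<open>\<Lambda>(W)\<close> is cut out of the simplex by finitely many linear equations, so it is a
  polytope; it is nonempty because the product weights \<open>\<lambda>\<^sub>D = \<Prod>\<^sub>x W(x, D x)\<close> represent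
  \<open>W\<close>. Each of the three capacities is, as a function of \<open>\<lambda> \<in> \<Lambda>(W)\<close>, the pointwise
  supremum of a bounded family of continuous convex functions: \<open>C\<^sub>1\<^sub>1\<close> is linear,
  \<open>C\<^sub>0\<^sub>1\<close> is a supremum of linear functions, and \<open>C\<^sub>1\<^sub>0\<close> is a supremum of the
  functions \<open>\<lambda> \<mapsto> I(\<mu>, V\<^sup>\<lambda>)\<close>, which are convex because \<open>V\<^sup>\<lambda>\<close> is affine in \<open>\<lambda>\<close> and
  mutual information is convex in the channel (log-sum inequality). Such a supremum \<open>C\<close> is
  convex, so on the polytope \<open>\<Lambda>(W)\<close> it attains its maximum at a vertex, and lower
  semicontinuous, so it attains its minimum. Along the segment from a minimiser to a maximiser,
  \<open>C\<close> is convex and lower semicontinuous, hence continuous, and the intermediate value theorem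
  shows that its range is the whole interval between the two extremes. Being linear,
  \<open>C\<^sub>1\<^sub>1\<close> also attains its minimum at a vertex.\<close>

lemma convex_on_SUP:
  fixes g :: "'p \<Rightarrow> 'a::real_vector \<Rightarrow> real"
  assumes "convex S" and P: "P \<noteq> {}"
    and convex: "\<And>\<mu>. \<mu> \<in> P \<Longrightarrow> convex_on S (g \<mu>)"
    and bdd: "\<And>x. x \<in> S \<Longrightarrow> bdd_above ((\<lambda>\<mu>. g \<mu> x) ` P)"
  shows "convex_on S (\<lambda>x. SUP \<mu>\<in>P. g \<mu> x)"
proof (rule convex_onI)
  fix t :: real and x y assume t: "0 < t" "t < 1" and xy: "x \<in> S" "y \<in> S"
  show "(SUP \<mu>\<in>P. g \<mu> ((1 - t) *\<^sub>R x + t *\<^sub>R y))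
      \<le> (1 - t) * (SUP \<mu>\<in>P. g \<mu> x) + t * (SUP \<mu>\<in>P. g \<mu> y)"
  proof (rule cSUP_least[OF P])
    fix \<mu> assume \<mu>: "\<mu> \<in> P"
    have "g \<mu> ((1 - t) *\<^sub>R x + t *\<^sub>R y) \<le> (1 - t) * g \<mu> x + t * g \<mu> y"
      using convex_onD[OF convex[OF \<mu>], of t x y] t xy by simp
    also have "\<dots> \<le> (1 - t) * (SUP \<mu>\<in>P. g \<mu> x) + t * (SUP \<mu>\<in>P. g \<mu> y)"
      using cSUP_upper[OF \<mu> bdd[OF xy(1)]] cSUP_upper[OF \<mu> bdd[OF xy(2)]] t
      by (intro add_mono mult_left_mono) auto
    finally show "g \<mu> ((1 - t) *\<^sub>R x + t *\<^sub>R y) \<le> \<dots>" .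
  qed
qed (rule \<open>convex S\<close>)

lemma SUP_continuous_attains_Inf:
  fixes g :: "'p \<Rightarrow> 'a::metric_space \<Rightarrow> real"
  assumes S: "compact S" "S \<noteq> {}" and P: "P \<noteq> {}"
    and cont: "\<And>\<mu>. \<mu> \<in> P \<Longrightarrow> continuous_on S (g \<mu>)"
    and bdd: "\<And>x. x \<in> S \<Longrightarrow> bdd_above ((\<lambda>\<mu>. g \<mu> x) ` P)"
  shows "\<exists>x0\<in>S. \<forall>x\<in>S. (SUP \<mu>\<in>P. g \<mu> x0) \<le> (SUP \<mu>\<in>P. g \<mu> x)"
proof -
  define C where "C x = (SUP \<mu>\<in>P. g \<mu> x)" for x
  have upper: "g \<mu> x \<le> C x" if "\<mu> \<in> P" "x \<in> S" for \<mu> x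
    unfolding C_def using cSUP_upper[OF that(1) bdd[OF that(2)]] .
  obtain \<mu>0 where "\<mu>0 \<in> P" using P by auto
  then have "bdd_below (g \<mu>0 ` S)"
    using compact_continuous_image[OF cont S(1)] by (simp add: bounded_imp_bdd_below compact_imp_bounded)
  then obtain L where L: "\<And>x. x \<in> S \<Longrightarrow> L \<le> g \<mu>0 x"
    by (auto simp: bdd_below_def)
  have "L \<le> C x" if "x \<in> S" for x
    using L[OF that] upper[OF \<open>\<mu>0 \<in> P\<close> that] by linarith
  then have bdd_C: "bdd_below (C ` S)"
    by (rule bdd_belowI2)
  define m where "m = (INF x\<in>S. C x)"
  have "\<exists>y\<in>S. C y < m + inverse (real (Suc n))" for n
    using cInf_lessD[of "C ` S" "m + inverse (real (Suc n))"] S(2) by (auto simp: m_def)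
  then obtain y where y: "\<And>n. y n \<in> S" "\<And>n. C (y n) < m + inverse (real (Suc n))"
    by metis
  obtain x0 r where x0: "x0 \<in> S" "strict_mono r" "(y \<circ> r) \<longlonglongrightarrow> x0"
    using compact_imp_seq_compact[OF S(1)] y(1) unfolding seq_compact_def by metis
  have "C x0 \<le> m"
    unfolding C_def
  proof (rule cSUP_least[OF P])
    fix \<mu> assume \<mu>: "\<mu> \<in> P"
    have "(\<lambda>n. g \<mu> ((y \<circ> r) n)) \<longlonglongrightarrow> g \<mu> x0"
      using continuous_on_tendsto_compose[OF cont[OF \<mu>] x0(3) x0(1)] y(1) by auto
    moreover have "((\<lambda>n. m + inverse (real (Suc n))) \<circ> r) \<longlonglongrightarrow> m"
      by (rule LIMSEQ_subseq_LIMSEQ[OF LIMSEQ_inverse_real_of_nat_add x0(2)])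
    moreover have "\<forall>n. g \<mu> ((y \<circ> r) n) \<le> ((\<lambda>n. m + inverse (real (Suc n))) \<circ> r) n"
      using upper[OF \<mu> y(1)] y(2) less_imp_le order_trans by (metis comp_apply)
    ultimately show "g \<mu> x0 \<le> m"
      by (intro LIMSEQ_le[where X = "\<lambda>n. g \<mu> ((y \<circ> r) n)"]) auto
  qed
  moreover have "m \<le> C x" if "x \<in> S" for x
    unfolding m_def using cINF_lower[OF bdd_C that] .
  ultimately have "C x0 \<le> C x" if "x \<in> S" for x
    using that by (meson order_trans)
  with x0(1) show ?thesis
    unfolding C_def by blast
qed

text \<open>A convex function on \<open>[0, 1]\<close> is continuous in the interior; at the endpoints it is
  upper semicontinuous because it lies below its chord, and lower semicontinuous as a supremum of
  continuous functions.\<close>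
lemma continuous_on_convex_SUP_unit_interval:
  fixes \<phi> :: "real \<Rightarrow> real" and f :: "'p \<Rightarrow> real \<Rightarrow> real"
  assumes convex: "convex_on {0..1} \<phi>" and P: "P \<noteq> {}"
    and cont: "\<And>\<mu>. \<mu> \<in> P \<Longrightarrow> continuous_on {0..1} (f \<mu>)"
    and bdd: "\<And>t. t \<in> {0..1} \<Longrightarrow> bdd_above ((\<lambda>\<mu>. f \<mu> t) ` P)"
    and \<phi>_eq: "\<And>t. t \<in> {0..1} \<Longrightarrow> \<phi> t = (SUP \<mu>\<in>P. f \<mu> t)"
  shows "continuous_on {0..1} \<phi>"
proof -
  have chord: "\<phi> s \<le> (1 - s) * \<phi> 0 + s * \<phi> 1" if "s \<in> {0..1}" for s
    using convex_onD[OF convex, of s 0 1] that by simp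
  have in_01: "eventually (\<lambda>s. s \<in> {0..1}) (at t within {0..1})" for t :: real
    by (simp add: eventually_at_filter)
  have "continuous (at t within {0..1}) \<phi>" if t: "t \<in> {0..1}" for t
  proof (cases "t \<in> {0<..<1}")
    case True
    have "convex_on {0<..<1} \<phi>"
      by (rule convex_on_subset[OF convex]) auto
    then have "continuous_on {0<..<1} \<phi>"
      by (rule convex_on_continuous[OF open_greaterThanLessThan])
    then have "continuous (at t) \<phi>"
      using True by (simp add: continuous_on_eq_continuous_at)
    then show ?thesis
      by (rule continuous_at_imp_continuous_within)
  next
    case False
    with t have endpoint: "t = 0 \<or> t = 1" by auto
    show ?thesis unfolding continuous_within
    proof (rule order_tendstoI)
      fix a assume "a < \<phi> t"
      then obtain \<mu> where \<mu>: "\<mu> \<in> P" "a < f \<mu> t"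
        using less_cSUP_iff[OF P bdd[OF t]] \<phi>_eq[OF t] by auto
      have "eventually (\<lambda>s. a < f \<mu> s) (at t within {0..1})"
        using cont[OF \<mu>(1)] t \<mu>(2)
        by (intro order_tendstoD(1)) (auto simp: continuous_on_eq_continuous_within continuous_within)
      then show "eventually (\<lambda>s. a < \<phi> s) (at t within {0..1})"
        using in_01[of t]
      proof eventually_elim
        case (elim s)
        with cSUP_upper[OF \<mu>(1) bdd[OF elim(2)]] \<phi>_eq[OF elim(2)] show ?case
          by linarith
      qed
    next
      fix a assume "\<phi> t < a"
      have "((\<lambda>s. (1 - s) * \<phi> 0 + s * \<phi> 1) \<longlongrightarrow> (1 - t) * \<phi> 0 + t * \<phi> 1)
          (at t within {0..1})"
        by (intro tendsto_intros)
      moreover have "(1 - t) * \<phi> 0 + t * \<phi> 1 = \<phi> t"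
        using endpoint by auto
      ultimately have "eventually (\<lambda>s. (1 - s) * \<phi> 0 + s * \<phi> 1 < a) (at t within {0..1})"
        using \<open>\<phi> t < a\<close> by (metis order_tendstoD(2))
      then show "eventually (\<lambda>s. \<phi> s < a) (at t within {0..1})"
        using in_01[of t] by eventually_elim (use chord in fastforce)
    qed
  qed
  then show ?thesis
    by (simp add: continuous_on_eq_continuous_within)
qed

lemma convex_on_max_at_extreme_point:
  fixes S :: "'a::euclidean_space set"
  assumes "compact S" "convex S" "S \<noteq> {}" and finite: "finite {v. v extreme_point_of S}"
    and "convex_on S C"
  shows "\<exists>v. v extreme_point_of S \<and> (\<forall>x\<in>S. C x \<le> C v)"
proof -
  define E where "E = {v. v extreme_point_of S}"
  have hull: "S = convex hull E"
    unfolding E_def using Krein_Milman_Minkowski assms(1,2) .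
  then have "E \<noteq> {}"
    using \<open>S \<noteq> {}\<close> by auto
  then have "Max (C ` E) \<in> C ` E"
    using finite unfolding E_def[symmetric] by (intro Max_in) auto
  then obtain v where v: "v \<in> E" "C v = Max (C ` E)"
    by auto
  then have "\<forall>x\<in>E. C x \<le> C v"
    using finite unfolding E_def[symmetric] by simp
  then have "\<forall>x\<in>convex hull E. C x \<le> C v"
    using \<open>convex_on S C\<close> hull by (intro convex_on_convex_hull_bound) auto
  then show ?thesis
    using v(1) hull unfolding E_def by blast
qed

lemma image_eq_interval_if_continuous_on_segment:
  fixes S :: "'a::real_vector set" and C :: "'a \<Rightarrow> real"
  assumes "convex S" "x0 \<in> S" "v \<in> S" and bounds: "\<And>x. x \<in> S \<Longrightarrow> C x0 \<le> C x \<and> C x \<le> C v"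
    and cont: "continuous_on {0..1} (\<lambda>t. C ((1 - t) *\<^sub>R x0 + t *\<^sub>R v))"
  shows "C ` S = {C x0..C v}"
proof
  show "C ` S \<subseteq> {C x0..C v}"
    using bounds by auto
next
  show "{C x0..C v} \<subseteq> C ` S"
  proof
    fix c assume "c \<in> {C x0..C v}"
    then obtain t where "0 \<le> t" "t \<le> 1" "C ((1 - t) *\<^sub>R x0 + t *\<^sub>R v) = c"
      using IVT'[of "\<lambda>t. C ((1 - t) *\<^sub>R x0 + t *\<^sub>R v)" 0 c 1, OF _ _ _ cont] by force
    moreover have "(1 - t) *\<^sub>R x0 + t *\<^sub>R v \<in> S"
      using convexD[OF assms(1-3)] \<open>0 \<le> t\<close> \<open>t \<le> 1\<close> by simp
    ultimately show "c \<in> C ` S"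
      by blast
  qed
qed

lemma convex_on_segment_param:
  fixes S :: "'a::real_vector set"
  assumes "convex_on S C" "x \<in> S" "y \<in> S"
  shows "convex_on {0..1} (\<lambda>t. C ((1 - t) *\<^sub>R x + t *\<^sub>R y))"
proof (rule convex_onI)
  fix u s1 s2 :: real assume u: "0 < u" "u < 1" and s: "s1 \<in> {0..1}" "s2 \<in> {0..1}"
  have on_segment: "(1 - s) *\<^sub>R x + s *\<^sub>R y \<in> S" if "s \<in> {0..1}" for s
    using convexD[OF convex_on_imp_convex[OF assms(1)] assms(2,3)] that by simp
  have "(1 - ((1 - u) *\<^sub>R s1 + u *\<^sub>R s2)) *\<^sub>R x + ((1 - u) *\<^sub>R s1 + u *\<^sub>R s2) *\<^sub>R y
      = (1 - u) *\<^sub>R ((1 - s1) *\<^sub>R x + s1 *\<^sub>R y) + u *\<^sub>R ((1 - s2) *\<^sub>R x + s2 *\<^sub>R y)"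
    by (simp add: algebra_simps)
  then show "C ((1 - ((1 - u) *\<^sub>R s1 + u *\<^sub>R s2)) *\<^sub>R x + ((1 - u) *\<^sub>R s1 + u *\<^sub>R s2) *\<^sub>R y)
      \<le> (1 - u) * C ((1 - s1) *\<^sub>R x + s1 *\<^sub>R y) + u * C ((1 - s2) *\<^sub>R x + s2 *\<^sub>R y)"
    using convex_onD[OF assms(1), of u] u on_segment[OF s(1)] on_segment[OF s(2)] by simp
qed (rule convex_real_interval)

lemma range_and_max_of_SUP_convex:
  fixes S :: "'a::euclidean_space set" and g :: "'p \<Rightarrow> 'a \<Rightarrow> real"
  assumes S: "compact S" "convex S" "S \<noteq> {}" "finite {v. v extreme_point_of S}"
    and P: "P \<noteq> {}"
    and cont: "\<And>\<mu>. \<mu> \<in> P \<Longrightarrow> continuous_on S (g \<mu>)"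
    and convex: "\<And>\<mu>. \<mu> \<in> P \<Longrightarrow> convex_on S (g \<mu>)"
    and bdd: "\<And>x. x \<in> S \<Longrightarrow> bdd_above ((\<lambda>\<mu>. g \<mu> x) ` P)"
  defines "C \<equiv> \<lambda>x. SUP \<mu>\<in>P. g \<mu> x"
  shows "(\<exists>a b. a \<le> b \<and> C ` S = {a..b}) \<and>
    (\<exists>v. v extreme_point_of S \<and> (\<forall>x\<in>S. C x \<le> C v))"
proof -
  have "convex_on S C"
    unfolding C_def using S(2) P convex bdd by (rule convex_on_SUP)
  then obtain v where v: "v extreme_point_of S" "\<forall>x\<in>S. C x \<le> C v"
    using convex_on_max_at_extreme_point S by blast
  then have "v \<in> S"
    by (simp add: extreme_point_of_def)
  obtain x0 where x0: "x0 \<in> S" "\<forall>x\<in>S. C x0 \<le> C x"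
    using SUP_continuous_attains_Inf[OF S(1,3) P cont bdd] unfolding C_def by blast
  define p where "p t = (1 - t) *\<^sub>R x0 + t *\<^sub>R v" for t
  have p_in: "p t \<in> S" if "t \<in> {0..1}" for t
    using convexD[OF S(2) x0(1) \<open>v \<in> S\<close>] that by (simp add: p_def)
  have "continuous_on {0..1} (\<lambda>t. C (p t))"
  proof (rule continuous_on_convex_SUP_unit_interval[OF _ P])
    show "convex_on {0..1} (\<lambda>t. C (p t))"
      unfolding p_def by (rule convex_on_segment_param[OF \<open>convex_on S C\<close> x0(1) \<open>v \<in> S\<close>])
    show "continuous_on {0..1} (\<lambda>t. g \<mu> (p t))" if "\<mu> \<in> P" for \<mu>
      using p_in unfolding p_def
      by (intro continuous_on_compose2[OF cont[OF that]] continuous_intros) auto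
    show "bdd_above ((\<lambda>\<mu>. g \<mu> (p t)) ` P)" "C (p t) = (SUP \<mu>\<in>P. g \<mu> (p t))"
      if "t \<in> {0..1}" for t
      using bdd[OF p_in[OF that]] by (simp_all add: C_def)
  qed
  then have "C ` S = {C x0..C v}"
    using x0 v(2) unfolding p_def
    by (intro image_eq_interval_if_continuous_on_segment[OF S(2) x0(1) \<open>v \<in> S\<close>]) auto
  then show ?thesis
    using v x0 \<open>v \<in> S\<close> by auto
qed

lemma convex_on_linear_weights:
  fixes c :: "'n::finite \<Rightarrow> real"
  assumes "convex S"
  shows "convex_on S (\<lambda>l. \<Sum>i\<in>UNIV. l $ i * c i)"
proof (rule convex_onI)
  fix t :: real and l1 l2 :: "real^'n"
  show "(\<Sum>i\<in>UNIV. ((1 - t) *\<^sub>R l1 + t *\<^sub>R l2) $ i * c i)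
      \<le> (1 - t) * (\<Sum>i\<in>UNIV. l1 $ i * c i) + t * (\<Sum>i\<in>UNIV. l2 $ i * c i)"
  proof -
    have "(\<Sum>i\<in>UNIV. ((1 - t) *\<^sub>R l1 + t *\<^sub>R l2) $ i * c i)
        = (\<Sum>i\<in>UNIV. (1 - t) * (l1 $ i * c i) + t * (l2 $ i * c i))"
      by (intro sum.cong) (simp_all add: algebra_simps)
    then show ?thesis
      by (simp add: sum.distrib sum_distrib_left)
  qed
qed (rule assms)

text \<open>The summand \<open>s ln (s / t)\<close> of a relative entropy. Since \<open>ln 0 = 0\<close> in Isabelle,
  \<open>kl_term 0 t = 0\<close> without a case distinction.\<close>
definition kl_term :: "real \<Rightarrow> real \<Rightarrow> real" where
  "kl_term s t = s * ln s - s * ln t"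

lemma kl_term_nonpos:
  assumes "0 \<le> s" "s \<le> t"
  shows "kl_term s t \<le> 0"
proof (cases "s = 0")
  case False
  with assms have "s * ln s \<le> s * ln t"
    by (intro mult_left_mono) auto
  then show ?thesis
    by (simp add: kl_term_def)
qed (simp add: kl_term_def)

lemma kl_term_antimono:
  assumes "0 \<le> s" "s \<le> t" "t \<le> t'"
  shows "kl_term s t' \<le> kl_term s t"
proof (cases "s = 0")
  case False
  with assms have "s * ln t \<le> s * ln t'"
    by (intro mult_left_mono) auto
  then show ?thesis
    by (simp add: kl_term_def)
qed (simp add: kl_term_def)

lemma kl_term_scale:
  assumes "0 \<le> c" "0 \<le> s" "s \<le> t"
  shows "kl_term (c * s) (c * t) = c * kl_term s t"
proof (cases "c = 0 \<or> s = 0")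
  case False
  with assms show ?thesis
    by (simp add: kl_term_def ln_mult algebra_simps)
qed (auto simp: kl_term_def)

text \<open>The log-sum inequality for two terms; it follows from the concavity of \<open>ln\<close>, applied
  to the ratios \<open>v\<^sub>i / w\<^sub>i\<close> with weights \<open>w\<^sub>i / (w\<^sub>1 + w\<^sub>2)\<close>.\<close>
lemma kl_term_add_le:
  assumes "0 \<le> w1" "w1 \<le> v1" "0 \<le> w2" "w2 \<le> v2"
  shows "kl_term (w1 + w2) (v1 + v2) \<le> kl_term w1 v1 + kl_term w2 v2"
proof (cases "w1 = 0 \<or> w2 = 0")
  case True
  with assms show ?thesis
    using kl_term_antimono[of w1 v1 "v1 + v2"] kl_term_antimono[of w2 v2 "v1 + v2"]
    by (auto simp: kl_term_def)
next
  case False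
  define W V where "W = w1 + w2" and "V = v1 + v2"
  have pos: "0 < w1" "0 < w2" "0 < v1" "0 < v2" "0 < W" "0 < V"
    using False assms by (auto simp: W_def V_def)
  have "1 - w2 / W = w1 / W"
    using pos by (simp add: field_simps W_def)
  moreover have "(w1 / W) * (v1 / w1) + (w2 / W) * (v2 / w2) = V / W"
    using pos by (simp add: field_simps V_def)
  ultimately have "(w1 / W) * ln (v1 / w1) + (w2 / W) * ln (v2 / w2) \<le> ln (V / W)"
    using concave_onD[OF ln_concave, of "w2 / W" "v1 / w1" "v2 / w2"] pos
    by (simp add: W_def)
  then have "W * ((w1 / W) * ln (v1 / w1) + (w2 / W) * ln (v2 / w2)) \<le> W * ln (V / W)"
    using pos by (intro mult_left_mono) auto
  then have "w1 * ln (v1 / w1) + w2 * ln (v2 / w2) \<le> W * ln (V / W)"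
    using pos by (simp add: algebra_simps)
  then show ?thesis
    using pos unfolding W_def V_def kl_term_def by (simp add: ln_div algebra_simps)
qed

lemma kl_term_convex_combination:
  assumes "0 \<le> s1" "s1 \<le> t1" "0 \<le> s2" "s2 \<le> t2" "0 \<le> u" "u \<le> 1"
  shows "kl_term ((1 - u) * s1 + u * s2) ((1 - u) * t1 + u * t2)
    \<le> (1 - u) * kl_term s1 t1 + u * kl_term s2 t2"
proof -
  have "kl_term ((1 - u) * s1 + u * s2) ((1 - u) * t1 + u * t2)
      \<le> kl_term ((1 - u) * s1) ((1 - u) * t1) + kl_term (u * s2) (u * t2)"
    using assms by (intro kl_term_add_le mult_left_mono mult_nonneg_nonneg) auto
  also have "\<dots> = (1 - u) * kl_term s1 t1 + u * kl_term s2 t2"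
    using assms by (simp add: kl_term_scale)
  finally show ?thesis .
qed

lemma isCont_x_ln_x: "isCont (\<lambda>x::real. x * ln x) x"
proof (cases "x = 0")
  case True
  have "((\<lambda>y::real. - (ln y / y)) \<longlongrightarrow> 0) at_top"
    using tendsto_minus[OF ln_x_over_x_tendsto_0] by simp
  then have "((\<lambda>x::real. - (ln (inverse x) / inverse x)) \<longlongrightarrow> 0) (at_right 0)"
    by (rule filterlim_compose[OF _ filterlim_inverse_at_top_right])
  then have right: "((\<lambda>x::real. x * ln x) \<longlongrightarrow> 0) (at_right 0)"
    by (simp add: ln_inverse divide_inverse mult.commute)
  then have "((\<lambda>x::real. x * ln x) \<longlongrightarrow> 0) (at_left 0)"
    unfolding filterlim_at_left_to_right[of _ _ 0] using tendsto_minus[OF right]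
    by (simp add: ln_minus)
  from this right have "((\<lambda>x::real. x * ln x) \<longlongrightarrow> 0) (at 0)"
    by (rule filterlim_split_at)
  with True show ?thesis
    by (simp add: isCont_def)
qed (intro continuous_intros, simp)

lemma continuous_on_x_ln_x [continuous_intros]:
  fixes f :: "'a::topological_space \<Rightarrow> real"
  shows "continuous_on S f \<Longrightarrow> continuous_on S (\<lambda>x. f x * ln (f x))"
  using continuous_on_compose2[OF continuous_at_imp_continuous_on[OF ballI[OF isCont_x_ln_x]]]
  by blast

definition row_stochastic :: "('a::finite \<Rightarrow> 'b::finite \<Rightarrow> real) \<Rightarrow> bool" where
  "row_stochastic K \<longleftrightarrow> (\<forall>a b. 0 \<le> K a b) \<and> (\<forall>a. (\<Sum>b\<in>UNIV. K a b) = 1)"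

lemma prob_dists_nonneg: "\<mu> \<in> prob_dists \<Longrightarrow> 0 \<le> \<mu> a"
  by (simp add: prob_dists_def)

lemma joint_le_outd:
  assumes "\<mu> \<in> prob_dists" "row_stochastic K"
  shows "\<mu> a * K a b \<le> outd \<mu> K b"
  unfolding outd_def using assms
  by (intro member_le_sum) (auto simp: prob_dists_def row_stochastic_def)

lemma MI_eq_sum_kl_term:
  fixes \<mu> :: "'a::finite \<Rightarrow> real" and K :: "'a \<Rightarrow> 'b::finite \<Rightarrow> real"
  assumes \<mu>: "\<mu> \<in> prob_dists" and K: "row_stochastic K"
  shows "MI \<mu> K =
    (\<Sum>a\<in>UNIV. (\<Sum>b\<in>UNIV. kl_term (\<mu> a * K a b) (outd \<mu> K b)) - \<mu> a * ln (\<mu> a)) / ln 2"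
proof -
  have "(if \<mu> a = 0 then 0 else \<mu> a * KL (K a) (outd \<mu> K))
      = ((\<Sum>b\<in>UNIV. kl_term (\<mu> a * K a b) (outd \<mu> K b)) - \<mu> a * ln (\<mu> a)) / ln 2" for a
  proof (cases "\<mu> a = 0")
    case False
    then have "0 < \<mu> a"
      using prob_dists_nonneg[OF \<mu>, of a] by simp
    have summand: "\<mu> a * (if K a b = 0 then 0 else K a b * log 2 (K a b / outd \<mu> K b))
        = (kl_term (\<mu> a * K a b) (outd \<mu> K b) - \<mu> a * K a b * ln (\<mu> a)) / ln 2" for b
    proof (cases "K a b = 0")
      case False
      moreover have "0 \<le> K a b"
        using K by (simp add: row_stochastic_def)
      ultimately have "0 < K a b"
        by simp
      moreover have "0 < outd \<mu> K b"
        using joint_le_outd[OF \<mu> K, of a b] \<open>0 < \<mu> a\<close> \<open>0 < K a b\<close>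
        by (smt (verit) mult_pos_pos)
      ultimately show ?thesis
        using \<open>0 < \<mu> a\<close> \<open>K a b \<noteq> 0\<close>
        by (simp add: kl_term_def log_def ln_div ln_mult algebra_simps diff_divide_distrib)
    qed (simp add: kl_term_def)
    have "\<mu> a * KL (K a) (outd \<mu> K)
        = (\<Sum>b\<in>UNIV. kl_term (\<mu> a * K a b) (outd \<mu> K b) - \<mu> a * K a b * ln (\<mu> a)) / ln 2"
      by (simp add: KL_def sum_distrib_left summand sum_divide_distrib)
    also have "\<dots> = ((\<Sum>b\<in>UNIV. kl_term (\<mu> a * K a b) (outd \<mu> K b))
        - \<mu> a * ln (\<mu> a) * (\<Sum>b\<in>UNIV. K a b)) / ln 2"
      by (simp add: sum_subtractf sum_distrib_left algebra_simps)
    finally show ?thesis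
      using False K by (simp add: row_stochastic_def)
  qed (simp add: kl_term_def)
  then show ?thesis
    by (simp add: MI_def sum_divide_distrib)
qed

lemma MI_eq_entropy_sum:
  fixes \<mu> :: "'a::finite \<Rightarrow> real" and K :: "'a \<Rightarrow> 'b::finite \<Rightarrow> real"
  assumes \<mu>: "\<mu> \<in> prob_dists" and K: "row_stochastic K"
  shows "MI \<mu> K = ((\<Sum>b\<in>UNIV. (\<Sum>a\<in>UNIV. (\<mu> a * K a b) * ln (\<mu> a * K a b))
      - outd \<mu> K b * ln (outd \<mu> K b)) - (\<Sum>a\<in>UNIV. \<mu> a * ln (\<mu> a))) / ln 2"
proof -
  have "(\<Sum>a\<in>UNIV. kl_term (\<mu> a * K a b) (outd \<mu> K b))
      = (\<Sum>a\<in>UNIV. (\<mu> a * K a b) * ln (\<mu> a * K a b)) - outd \<mu> K b * ln (outd \<mu> K b)" for b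
    by (simp add: kl_term_def sum_subtractf sum_distrib_right outd_def)
  then show ?thesis
    unfolding MI_eq_sum_kl_term[OF \<mu> K] sum_subtractf
    by (subst sum.swap) (simp add: sum_subtractf)
qed

lemma MI_le_card:
  fixes \<mu> :: "'a::finite \<Rightarrow> real" and K :: "'a \<Rightarrow> 'b::finite \<Rightarrow> real"
  assumes \<mu>: "\<mu> \<in> prob_dists" and K: "row_stochastic K"
  shows "MI \<mu> K \<le> real CARD('a) / ln 2"
proof -
  have "- (x * ln x) \<le> 1" if "0 \<le> x" for x :: real
  proof (cases "x = 0")
    case False
    with that have "ln (inverse x) \<le> inverse x - 1"
      by (intro ln_le_minus_one) simp
    with False that have "x * - ln x \<le> x * (inverse x - 1)"
      by (intro mult_left_mono) (auto simp: ln_inverse)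
    also have "\<dots> = 1 - x"
      using False by (simp add: field_simps)
    finally show ?thesis
      using that by simp
  qed simp
  moreover have "(\<Sum>b\<in>UNIV. kl_term (\<mu> a * K a b) (outd \<mu> K b)) \<le> 0" for a
    using \<mu> K by (intro sum_nonpos kl_term_nonpos joint_le_outd)
      (auto simp: prob_dists_def row_stochastic_def)
  ultimately have "(\<Sum>a\<in>UNIV. (\<Sum>b\<in>UNIV. kl_term (\<mu> a * K a b) (outd \<mu> K b)) - \<mu> a * ln (\<mu> a))
      \<le> (\<Sum>a\<in>(UNIV::'a set). 1)"
    using prob_dists_nonneg[OF \<mu>] by (intro sum_mono) (smt (verit))
  then show ?thesis
    unfolding MI_eq_sum_kl_term[OF \<mu> K] by (simp add: divide_right_mono)
qed

text \<open>The output distribution is linear in the channel, so this reduces to the joint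
  convexity of \<^const>\<open>kl_term\<close>.\<close>
lemma MI_convex_combination:
  fixes \<mu> :: "'a::finite \<Rightarrow> real" and K1 K2 :: "'a \<Rightarrow> 'b::finite \<Rightarrow> real"
  assumes \<mu>: "\<mu> \<in> prob_dists" and K: "row_stochastic K1" "row_stochastic K2"
    and t: "0 \<le> t" "t \<le> 1"
  shows "MI \<mu> (\<lambda>a b. (1 - t) * K1 a b + t * K2 a b) \<le> (1 - t) * MI \<mu> K1 + t * MI \<mu> K2"
proof -
  define K where "K a b = (1 - t) * K1 a b + t * K2 a b" for a b
  have "row_stochastic K"
    using K t by (simp add: row_stochastic_def K_def sum.distrib sum_distrib_left[symmetric])
  have outd_K: "outd \<mu> K b = (1 - t) * outd \<mu> K1 b + t * outd \<mu> K2 b" for b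
  proof -
    have "outd \<mu> K b = (\<Sum>a\<in>UNIV. (1 - t) * (\<mu> a * K1 a b) + t * (\<mu> a * K2 a b))"
      by (simp add: outd_def K_def algebra_simps)
    then show ?thesis
      by (simp add: outd_def sum.distrib sum_distrib_left)
  qed
  define H where "H K' a = (\<Sum>b\<in>UNIV. kl_term (\<mu> a * K' a b) (outd \<mu> K' b))"
    for K' :: "'a \<Rightarrow> 'b \<Rightarrow> real" and a
  define A where "A K' = (\<Sum>a\<in>UNIV. H K' a - \<mu> a * ln (\<mu> a))" for K'
  have kl_le: "kl_term (\<mu> a * K a b) (outd \<mu> K b)
      \<le> (1 - t) * kl_term (\<mu> a * K1 a b) (outd \<mu> K1 b) + t * kl_term (\<mu> a * K2 a b) (outd \<mu> K2 b)"
    for a b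
  proof -
    have mix: "\<mu> a * K a b = (1 - t) * (\<mu> a * K1 a b) + t * (\<mu> a * K2 a b)"
      by (simp add: K_def algebra_simps)
    show ?thesis
      unfolding outd_K mix
      by (intro kl_term_convex_combination joint_le_outd[OF \<mu>] mult_nonneg_nonneg)
        (use K t prob_dists_nonneg[OF \<mu>] in \<open>auto simp: row_stochastic_def\<close>)
  qed
  have H_le: "H K a \<le> (1 - t) * H K1 a + t * H K2 a" for a
  proof -
    have "H K a \<le> (\<Sum>b\<in>UNIV. (1 - t) * kl_term (\<mu> a * K1 a b) (outd \<mu> K1 b)
        + t * kl_term (\<mu> a * K2 a b) (outd \<mu> K2 b))"
      unfolding H_def by (rule sum_mono) (rule kl_le)
    then show ?thesis
      by (simp add: H_def sum.distrib sum_distrib_left)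
  qed
  have "A K \<le> (\<Sum>a\<in>UNIV. (1 - t) * (H K1 a - \<mu> a * ln (\<mu> a)) + t * (H K2 a - \<mu> a * ln (\<mu> a)))"
    unfolding A_def
  proof (rule sum_mono)
    fix a
    have "(1 - t) * (H K1 a - \<mu> a * ln (\<mu> a)) + t * (H K2 a - \<mu> a * ln (\<mu> a))
        = (1 - t) * H K1 a + t * H K2 a - \<mu> a * ln (\<mu> a)"
      by (simp add: algebra_simps)
    with H_le[of a] show "H K a - \<mu> a * ln (\<mu> a)
        \<le> (1 - t) * (H K1 a - \<mu> a * ln (\<mu> a)) + t * (H K2 a - \<mu> a * ln (\<mu> a))"
      by linarith
  qed
  also have "\<dots> = (1 - t) * A K1 + t * A K2"
    by (simp add: A_def sum.distrib sum_distrib_left)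
  finally have "A K \<le> (1 - t) * A K1 + t * A K2" .
  moreover have MI_A: "MI \<mu> K' = A K' / ln 2" if "row_stochastic K'" for K'
    using MI_eq_sum_kl_term[OF \<mu> that] by (simp add: A_def H_def)
  ultimately have "MI \<mu> K \<le> (1 - t) * MI \<mu> K1 + t * MI \<mu> K2"
    unfolding MI_A[OF \<open>row_stochastic K\<close>] MI_A[OF K(1)] MI_A[OF K(2)]
    by (simp add: divide_right_mono add_divide_distrib[symmetric])
  then show ?thesis
    by (simp add: K_def[abs_def])
qed

lemma continuous_on_MI:
  fixes \<mu> :: "'a::finite \<Rightarrow> real"
    and K :: "'s::topological_space \<Rightarrow> 'a \<Rightarrow> 'b::finite \<Rightarrow> real"
  assumes \<mu>: "\<mu> \<in> prob_dists" and K: "\<And>l. l \<in> S \<Longrightarrow> row_stochastic (K l)"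
    and cont: "\<And>a b. continuous_on S (\<lambda>l. K l a b)"
  shows "continuous_on S (\<lambda>l. MI \<mu> (K l))"
proof -
  have "continuous_on S (\<lambda>l. ((\<Sum>b\<in>UNIV. (\<Sum>a\<in>UNIV. (\<mu> a * K l a b) * ln (\<mu> a * K l a b))
      - outd \<mu> (K l) b * ln (outd \<mu> (K l) b)) - (\<Sum>a\<in>UNIV. \<mu> a * ln (\<mu> a))) / ln 2)"
    unfolding outd_def by (intro continuous_on_x_ln_x continuous_intros cont) auto
  then show ?thesis
    by (rule continuous_on_cong[THEN iffD1, rotated 2])
       (simp_all add: MI_eq_entropy_sum[OF \<mu> K])
qed

lemma detmat_nth [simp]: "detmat D $ x $ y = (if D x = y then 1 else 0)"
  by (simp add: detmat_def)

lemma sum_funs_prod: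
  fixes f :: "'x::finite \<Rightarrow> 'y::finite \<Rightarrow> 'c::comm_semiring_1"
  shows "(\<Sum>D\<in>UNIV. \<Prod>x\<in>UNIV. f x (D x)) = (\<Prod>x\<in>UNIV. \<Sum>y\<in>UNIV. f x y)"
  using prod_sum_PiE[of UNIV "\<lambda>_. UNIV" f] by simp

lemma prod_weights_in_Lam:
  fixes W :: "real^'y::finite^'x::finite"
  assumes "is_channel W"
  shows "(\<chi> D. \<Prod>x\<in>UNIV. W$x$(D x)) \<in> Lam W"
proof -
  have nonneg: "\<And>a b. 0 \<le> W$a$b" and rows: "\<And>a. (\<Sum>b\<in>UNIV. W$a$b) = 1"
    using assms by (auto simp: is_channel_def)
  have mass: "(\<Sum>D\<in>UNIV. \<Prod>x\<in>UNIV. W$x$(D x)) = 1"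
    using sum_funs_prod[of "\<lambda>x y. W$x$y"] by (simp add: rows)
  have marginal: "(\<Sum>D\<in>UNIV. (\<Prod>x'\<in>UNIV. W$x'$(D x')) * (if D x = y then 1 else 0)) = W$x$y"
    for x y
  proof -
    define f where "f x' y' = (if x' \<noteq> x \<or> y' = y then W$x'$y' else 0)" for x' y'
    have "(\<Prod>x'\<in>UNIV. f x' (D x')) = (\<Prod>x'\<in>UNIV. W$x'$(D x')) * (if D x = y then 1 else 0)"
      for D :: "'x \<Rightarrow> 'y"
      by (cases "D x = y") (auto simp: f_def intro!: prod.cong)
    moreover have "(\<Sum>y'\<in>UNIV. f x' y') = (if x' = x then W$x$y else 1)" for x'
      by (simp add: f_def rows)
    ultimately show ?thesis
      using sum_funs_prod[of f] by simp
  qed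
  have "W = (\<Sum>D\<in>UNIV. (\<Prod>x\<in>UNIV. W$x$(D x)) *\<^sub>R detmat D)"
    by (simp add: vec_eq_iff sum_component marginal)
  then show ?thesis
    by (simp add: Lam_def nonneg prod_nonneg mass)
qed

lemma Lam_eq_polyhedral:
  fixes W :: "real^'y::finite^'x::finite"
  shows "Lam W = (\<Inter>D. {l. axis D 1 \<bullet> l \<ge> 0}) \<inter> {l. (\<chi> D. 1) \<bullet> l = 1}
    \<inter> (\<Inter>p. {l. (\<chi> D. detmat D $ fst p $ snd p) \<bullet> l = W $ fst p $ snd p})"
proof -
  have "W = (\<Sum>D\<in>UNIV. l $ D *\<^sub>R detmat D) \<longleftrightarrow>
      (\<forall>x y. (\<Sum>D\<in>UNIV. detmat D $ x $ y * l $ D) = W $ x $ y)" for l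
    by (auto simp: vec_eq_iff sum_component mult.commute)
  moreover have "axis D 1 \<bullet> l = l $ D" for D and l :: "real^('x \<Rightarrow> 'y)"
    by (simp add: cart_eq_inner_axis inner_commute)
  ultimately show ?thesis
    unfolding Lam_def by (auto simp: inner_vec_def)
qed

lemma polyhedron_Lam: "polyhedron (Lam W)"
  unfolding Lam_eq_polyhedral
  by (intro polyhedron_Int polyhedron_Inter finite_imageI finite)
     (auto intro: polyhedron_halfspace_ge polyhedron_hyperplane)

lemma bounded_Lam: "bounded (Lam W)"
proof -
  have "norm l \<le> 1" if "l \<in> Lam W" for l
  proof -
    have "norm l \<le> (\<Sum>D\<in>UNIV. \<bar>l $ D\<bar>)" by (rule norm_le_l1_cart)
    also have "\<dots> = 1" using that by (simp add: Lam_def)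
    finally show ?thesis .
  qed
  then show ?thesis unfolding bounded_iff by blast
qed

lemma convex_Lam: "convex (Lam W)"
  by (rule polyhedron_imp_convex[OF polyhedron_Lam])

lemma compact_Lam: "compact (Lam W)"
  by (simp add: compact_eq_bounded_closed bounded_Lam polyhedron_imp_closed[OF polyhedron_Lam])

lemma polytope_Lam: "polytope (Lam W)"
  by (simp add: polytope_eq_bounded_polyhedron bounded_Lam polyhedron_Lam)

lemma finite_extreme_points_Lam: "finite {v. v extreme_point_of Lam W}"
  by (rule finite_polyhedron_extreme_points[OF polyhedron_Lam])

lemma Lam_probability:
  assumes "l \<in> Lam W"
  shows "0 \<le> l $ D" "(\<Sum>D\<in>UNIV. l $ D) = 1"
  using assms by (simp_all add: Lam_def)

lemma Lam_SUP_range_and_max: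
  fixes W :: "real^'y::finite^'x::finite" and g :: "'p \<Rightarrow> real^('x \<Rightarrow> 'y) \<Rightarrow> real"
  assumes W: "is_channel W" and P: "P \<noteq> {}"
    and cont: "\<And>\<mu>. \<mu> \<in> P \<Longrightarrow> continuous_on (Lam W) (g \<mu>)"
    and convex: "\<And>\<mu>. \<mu> \<in> P \<Longrightarrow> convex_on (Lam W) (g \<mu>)"
    and bdd: "\<And>l. l \<in> Lam W \<Longrightarrow> bdd_above ((\<lambda>\<mu>. g \<mu> l) ` P)"
    and C: "\<And>l. l \<in> Lam W \<Longrightarrow> C l = (SUP \<mu>\<in>P. g \<mu> l)"
  shows "(\<exists>a b. a \<le> b \<and> C ` Lam W = {a..b}) \<and>
    (\<exists>v. v extreme_point_of Lam W \<and> C v = Cupper C W)"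
proof -
  have "Lam W \<noteq> {}"
    using prod_weights_in_Lam[OF W] by blast
  then have "(\<exists>a b. a \<le> b \<and> C ` Lam W = {a..b}) \<and>
      (\<exists>v. v extreme_point_of Lam W \<and> (\<forall>l\<in>Lam W. C l \<le> C v))"
    using range_and_max_of_SUP_convex[OF compact_Lam convex_Lam _ finite_extreme_points_Lam
        P cont convex bdd]
    by (simp add: C cong: image_cong) (metis C extreme_point_of_def)
  moreover have "C v = Cupper C W" if "v extreme_point_of Lam W" "\<forall>l\<in>Lam W. C l \<le> C v" for v
    using that unfolding Cupper_def extreme_point_of_def
    by (intro cSup_eq_maximum[symmetric]) auto
  ultimately show ?thesis
    by blast
qed


lemma row_stochastic_detmat: "row_stochastic (\<lambda>x y. detmat D $ x $ y)"
  by (simp add: row_stochastic_def)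

lemma row_stochastic_Vlam:
  fixes W :: "real^'y::finite^'x::finite"
  assumes "l \<in> Lam W"
  shows "row_stochastic (Vlam l)"
proof -
  have "(\<Sum>y\<in>UNIV. Vlam l u y) = (\<Sum>D\<in>UNIV. l $ D * (\<Sum>y\<in>UNIV. detmat D $ u D $ y))" for u
    unfolding Vlam_def sum_distrib_left by (rule sum.swap)
  moreover have "(\<Sum>y\<in>UNIV. detmat D $ x $ y) = 1" for D :: "'x \<Rightarrow> 'y" and x
    by (simp add: sum.delta')
  ultimately show ?thesis
    using Lam_probability[OF assms]
    by (auto simp: row_stochastic_def Vlam_def intro!: sum_nonneg)
qed

lemma Vlam_convex_combination:
  "Vlam ((1 - t) *\<^sub>R l1 + t *\<^sub>R l2) = (\<lambda>u y. (1 - t) * Vlam l1 u y + t * Vlam l2 u y)"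
proof (intro ext)
  fix u y
  have "Vlam ((1 - t) *\<^sub>R l1 + t *\<^sub>R l2) u y
      = (\<Sum>D\<in>UNIV. (1 - t) * (l1 $ D * detmat D $ u D $ y) + t * (l2 $ D * detmat D $ u D $ y))"
    unfolding Vlam_def by (intro sum.cong) (simp_all add: algebra_simps)
  then show "Vlam ((1 - t) *\<^sub>R l1 + t *\<^sub>R l2) u y = (1 - t) * Vlam l1 u y + t * Vlam l2 u y"
    by (simp only: Vlam_def sum.distrib sum_distrib_left)
qed

lemma convex_on_MI_Vlam:
  assumes "\<mu> \<in> prob_dists"
  shows "convex_on (Lam W) (\<lambda>l. MI \<mu> (Vlam l))"
proof (rule convex_onI)
  fix t :: real and l1 l2 assume "0 < t" "t < 1" "l1 \<in> Lam W" "l2 \<in> Lam W"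
  then show "MI \<mu> (Vlam ((1 - t) *\<^sub>R l1 + t *\<^sub>R l2))
      \<le> (1 - t) * MI \<mu> (Vlam l1) + t * MI \<mu> (Vlam l2)"
    using MI_convex_combination[OF assms row_stochastic_Vlam row_stochastic_Vlam, of l1 W l2 W t]
    by (simp add: Vlam_convex_combination)
qed (rule convex_Lam)

lemma continuous_on_MI_Vlam:
  assumes "\<mu> \<in> prob_dists"
  shows "continuous_on (Lam W) (\<lambda>l. MI \<mu> (Vlam l))"
proof (rule continuous_on_MI[OF assms])
  show "row_stochastic (Vlam l)" if "l \<in> Lam W" for l
    using that by (rule row_stochastic_Vlam)
  show "continuous_on (Lam W) (\<lambda>l. Vlam l a b)" for a b
    unfolding Vlam_def by (intro continuous_intros)
qed

lemma prob_dists_nonempty: "prob_dists \<noteq> {}"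
proof -
  have "(\<lambda>a. if a = undefined then 1 else 0) \<in> prob_dists"
    by (simp add: prob_dists_def)
  then show ?thesis
    by blast
qed

lemma C10_range_and_max:
  fixes W :: "real^'y::finite^'x::finite"
  assumes "is_channel W"
  shows "(\<exists>a b. a \<le> b \<and> C10 ` Lam W = {a..b}) \<and>
    (\<exists>v. v extreme_point_of Lam W \<and> C10 v = Cupper C10 W)"
proof (rule Lam_SUP_range_and_max[OF assms prob_dists_nonempty continuous_on_MI_Vlam convex_on_MI_Vlam])
  fix l assume "l \<in> Lam W"
  then show "bdd_above ((\<lambda>\<mu>. MI \<mu> (Vlam l)) ` prob_dists)"
    using MI_le_card row_stochastic_Vlam by (fastforce intro: bdd_aboveI)
qed (simp_all add: C10_def)

lemma C01_range_and_max:
  fixes W :: "real^'y::finite^'x::finite"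
  assumes "is_channel W"
  shows "(\<exists>a b. a \<le> b \<and> C01 ` Lam W = {a..b}) \<and>
    (\<exists>v. v extreme_point_of Lam W \<and> C01 v = Cupper C01 W)"
proof (rule Lam_SUP_range_and_max[OF assms prob_dists_nonempty])
  fix l assume l: "l \<in> Lam W"
  have "(\<Sum>D\<in>UNIV. l $ D * MI \<mu> (\<lambda>x y. detmat D $ x $ y)) \<le> real CARD('x) / ln 2"
    if "\<mu> \<in> prob_dists" for \<mu> :: "'x \<Rightarrow> real"
  proof -
    have "(\<Sum>D\<in>UNIV. l $ D * MI \<mu> (\<lambda>x y. detmat D $ x $ y))
        \<le> (\<Sum>D\<in>UNIV. l $ D * (real CARD('x) / ln 2))"
      using Lam_probability[OF l] MI_le_card[OF that row_stochastic_detmat]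
      by (intro sum_mono mult_left_mono) auto
    also have "\<dots> = real CARD('x) / ln 2"
      using Lam_probability(2)[OF l] by (simp only: sum_distrib_right[symmetric])
    finally show ?thesis .
  qed
  then show "bdd_above ((\<lambda>\<mu>. \<Sum>D\<in>UNIV. l $ D * MI \<mu> (\<lambda>x y. detmat D $ x $ y)) ` prob_dists)"
    by (fastforce intro: bdd_aboveI)
qed (simp_all add: C01_def convex_on_linear_weights convex_Lam continuous_intros)

lemma C11_range_and_max:
  fixes W :: "real^'y::finite^'x::finite"
  assumes "is_channel W"
  shows "(\<exists>a b. a \<le> b \<and> C11 ` Lam W = {a..b}) \<and>
    (\<exists>v. v extreme_point_of Lam W \<and> C11 v = Cupper C11 W)"
  by (rule Lam_SUP_range_and_max[OF assms, where P = "UNIV :: unit set" and g = "\<lambda>_. C11"])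
    (simp_all add: C11_def[abs_def] convex_on_linear_weights convex_Lam continuous_intros)

lemma C11_min_at_extreme_point:
  fixes W :: "real^'y::finite^'x::finite"
  assumes "is_channel W"
  shows "\<exists>v. v extreme_point_of Lam W \<and> C11 v = Clower C11 W"
proof -
  have "convex_on (Lam W) (\<lambda>l. - C11 l)"
    unfolding C11_def sum_negf[symmetric] mult_minus_right[symmetric]
    by (rule convex_on_linear_weights[OF convex_Lam])
  then obtain v where v: "v extreme_point_of Lam W" "\<forall>l\<in>Lam W. C11 v \<le> C11 l"
    using convex_on_max_at_extreme_point[OF compact_Lam convex_Lam _ finite_extreme_points_Lam]
      prod_weights_in_Lam[OF assms] by force
  then have "C11 v = Clower C11 W"
    unfolding Clower_def extreme_point_of_def by (intro cInf_eq_minimum[symmetric]) auto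
  with v(1) show ?thesis
    by blast
qed

theorem theorem7:
  fixes W :: "real^'y::finite^'x::finite"
  assumes "is_channel W"
  shows "bounded (Lam W) \<and> closed (Lam W) \<and> convex (Lam W) \<and> polytope (Lam W) \<and>
    (\<forall>C \<in> {C10, C01, C11}.
        (\<exists>a b. a \<le> b \<and> C ` Lam W = {a..b}) \<and>
        (\<exists>v. v extreme_point_of Lam W \<and> C v = Cupper C W)) \<and>
    (\<exists>v. v extreme_point_of Lam W \<and> C11 v = Clower C11 W)"
  using bounded_Lam compact_imp_closed[OF compact_Lam] convex_Lam polytope_Lam
    C10_range_and_max[OF assms] C01_range_and_max[OF assms] C11_range_and_max[OF assms]
    C11_min_at_extreme_point[OF assms]
  by auto

end
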